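(* Over a unary alphabet $\{a\}$, a language is accepted by some poNFA if and only if it is $\mathcal{R}$-trivial.
   Context: A poNFA is an NFA whose reachability relation on states ($p\le q$ iff $q\in p\cdot w$ for some word $w$) is a partial order. $\mathrm{sub}_k(v)$ is the set of subsequences of $v$ of length at most $k$; $u\sim_k v$ iff $\mathrm{sub}_k(u)=\mathrm{sub}_k(v)$; $x\sim^{\mathcal{R}}_k y$ iff each prefix of $x$ is $\sim_k$-equivalent to some prefix of $y$ and vice versa. A regular language is $\mathcal{R}$-trivial if it is a union of $\sim^{\mathcal{R}}_k$-classes for some $k\ge0$. *)

theory Defs
  imports Main "HOL-Library.Sublist"
begin

record ('s, 'a) nfa =
  states :: "'s set"
  init   :: "'s set"
  trans  :: "'s \<Rightarrow> 'a \<Rightarrow> 's set"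
  final  :: "'s set"

definition nfa_wf :: "('s, 'a) nfa \<Rightarrow> bool" where
  "nfa_wf A \<longleftrightarrow> finite (states A) \<and> init A \<subseteq> states A \<and> final A \<subseteq> states A
     \<and> (\<forall>q \<in> states A. \<forall>x. trans A q x \<subseteq> states A)"

fun delta_star :: "('s, 'a) nfa \<Rightarrow> 's \<Rightarrow> 'a list \<Rightarrow> 's set" where
  "delta_star A q [] = {q}"
| "delta_star A q (x # w) = (\<Union>p \<in> trans A q x. delta_star A p w)"

definition lang :: "('s, 'a) nfa \<Rightarrow> 'a list set" where
  "lang A = {w. \<exists>q \<in> init A. delta_star A q w \<inter> final A \<noteq> {}}"

definition reach :: "('s, 'a) nfa \<Rightarrow> 's \<Rightarrow> 's \<Rightarrow> bool" where
  "reach A p q \<longleftrightarrow> (\<exists>w. q \<in> delta_star A p w)"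

text \<open>poNFA: the reachability relation on the states is a partial order
  (it is always reflexive and transitive, so this amounts to antisymmetry).\<close>
definition poNFA :: "('s, 'a) nfa \<Rightarrow> bool" where
  "poNFA A \<longleftrightarrow> nfa_wf A \<and>
     (\<forall>p \<in> states A. reach A p p) \<and>
     (\<forall>p \<in> states A. \<forall>q \<in> states A. \<forall>r \<in> states A. reach A p q \<and> reach A q r \<longrightarrow> reach A p r) \<and>
     (\<forall>p \<in> states A. \<forall>q \<in> states A. reach A p q \<and> reach A q p \<longrightarrow> p = q)"

definition regular :: "'a list set \<Rightarrow> bool" where
  "regular L \<longleftrightarrow> (\<exists>A :: (nat, 'a) nfa. nfa_wf A \<and> lang A = L)"

definition sub_k :: "nat \<Rightarrow> 'a list \<Rightarrow> 'a list set" where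
  "sub_k k v = {u. subseq u v \<and> length u \<le> k}"

definition sim_k :: "nat \<Rightarrow> 'a list \<Rightarrow> 'a list \<Rightarrow> bool" where
  "sim_k k u v \<longleftrightarrow> sub_k k u = sub_k k v"

definition simR_k :: "nat \<Rightarrow> 'a list \<Rightarrow> 'a list \<Rightarrow> bool" where
  "simR_k k x y \<longleftrightarrow>
     (\<forall>x'. prefix x' x \<longrightarrow> (\<exists>y'. prefix y' y \<and> sim_k k x' y')) \<and>
     (\<forall>y'. prefix y' y \<longrightarrow> (\<exists>x'. prefix x' x \<and> sim_k k x' y'))"

definition R_trivial :: "'a list set \<Rightarrow> bool" where
  "R_trivial L \<longleftrightarrow> regular L \<and>
     (\<exists>k. \<forall>x y. simR_k k x y \<longrightarrow> (x \<in> L \<longleftrightarrow> y \<in> L))"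

end

theory Submission
  imports Defs
begin

text \<open>Over a one-letter alphabet a word is determined by its length, and \<open>x \<sim>\<^sup>R\<^sub>k y\<close> holds
  exactly when \<open>min |x| k = min |y| k\<close>. So the R-trivial unary languages are those whose
  membership depends only on \<open>min |w| k\<close> for some k; the chain automaton
  \<open>0 \<rightarrow> 1 \<rightarrow> \<dots> \<rightarrow> k \<circlearrowleft>\<close> is partially ordered and accepts such a language. Conversely, a
  run of a poNFA on \<open>a\<^sup>m\<close> moves down the reachability order and can only stay put by
  self-loops; it changes state at most \<open>n - 1\<close> times, n being the number of states, so
  once \<open>m \<ge> n\<close> a self-loop is taken and the run can be stretched or shrunk to any length
  \<open>\<ge> n\<close>.\<close>

lemma unary_word:
  assumes "(UNIV :: 'a set) = {a}"
  shows "w = replicate (length w) (a :: 'a)"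
proof -
  have "x = a" for x :: 'a
    using assms by blast
  then show ?thesis
    by (metis list_eq_iff_nth_eq length_replicate nth_replicate)
qed

lemma unary_word_eqI:
  assumes "(UNIV :: 'a set) = {a}" and "length v = length (w :: 'a list)"
  shows "v = w"
  by (metis assms unary_word)

lemma unary_sub_k:
  assumes "(UNIV :: 'a set) = {a}"
  shows "sub_k k (v :: 'a list) = {u. length u \<le> min (length v) k}"
proof -
  have "subseq u v \<longleftrightarrow> length u \<le> length v" for u
  proof
    assume "length u \<le> length v"
    then have "v = u @ replicate (length v - length u) a"
      by (intro unary_word_eqI[OF assms]) simp
    then show "subseq u v"
      by (metis prefix_imp_subseq prefixI)
  qed (rule list_emb_length)
  then show ?thesis
    unfolding sub_k_def by auto
qed

lemma length_le_set_eq_iff: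
  "{u :: 'a list. length u \<le> m} = {u. length u \<le> n} \<longleftrightarrow> m = n"
proof
  assume "{u :: 'a list. length u \<le> m} = {u. length u \<le> n}"
  then have "length u \<le> m \<longleftrightarrow> length u \<le> n" for u :: "'a list"
    by blast
  from this[of "replicate m undefined"] this[of "replicate n undefined"] show "m = n"
    by simp
qed simp

lemma unary_sim_k_iff:
  assumes "(UNIV :: 'a set) = {a}"
  shows "sim_k k u (v :: 'a list) \<longleftrightarrow> min (length u) k = min (length v) k"
  unfolding sim_k_def unary_sub_k[OF assms] by (rule length_le_set_eq_iff)

lemma unary_prefixes_matched_iff:
  assumes "(UNIV :: 'a set) = {a}"
  shows "(\<forall>x'. prefix x' x \<longrightarrow> (\<exists>y'. prefix y' y \<and> sim_k k x' y'))
    \<longleftrightarrow> min (length x) k \<le> min (length (y :: 'a list)) k"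
proof
  assume "\<forall>x'. prefix x' x \<longrightarrow> (\<exists>y'. prefix y' y \<and> sim_k k x' y')"
  then obtain y' where "prefix y' y" "sim_k k x y'"
    by blast
  then show "min (length x) k \<le> min (length y) k"
    using prefix_length_le unary_sim_k_iff[OF assms] by fastforce
next
  assume le: "min (length x) k \<le> min (length y) k"
  show "\<forall>x'. prefix x' x \<longrightarrow> (\<exists>y'. prefix y' y \<and> sim_k k x' y')"
  proof (intro allI impI)
    fix x' assume "prefix x' x"
    then have "length x' \<le> length x"
      by (rule prefix_length_le)
    then have "sim_k k x' (take (length x') y)"
      using le by (simp add: unary_sim_k_iff[OF assms] min_def split: if_splits)
    then show "\<exists>y'. prefix y' y \<and> sim_k k x' y'"
      using take_is_prefix by blast
  qed
qed

lemma unary_simR_k_iff: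
  assumes "(UNIV :: 'a set) = {a}"
  shows "simR_k k x y \<longleftrightarrow> min (length x) k = min (length (y :: 'a list)) k"
proof -
  have "simR_k k x y \<longleftrightarrow>
      (\<forall>x'. prefix x' x \<longrightarrow> (\<exists>y'. prefix y' y \<and> sim_k k x' y')) \<and>
      (\<forall>y'. prefix y' y \<longrightarrow> (\<exists>x'. prefix x' x \<and> sim_k k y' x'))"
    unfolding simR_k_def sim_k_def by (simp add: eq_commute)
  then show ?thesis
    by (simp only: unary_prefixes_matched_iff[OF assms] order_eq_iff[of "min (length x) k"])
qed

definition reachable_states :: "('s, 'a) nfa \<Rightarrow> 's \<Rightarrow> 's set" where
  "reachable_states A q = {r \<in> states A. reach A q r}"

lemma poNFA_nfa_wf: "poNFA A \<Longrightarrow> nfa_wf A"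
  by (simp add: poNFA_def)

lemma reach_refl: "reach A q q"
  unfolding reach_def by (rule exI[of _ "[]"]) simp

lemma reach_trans_step: "p \<in> trans A q x \<Longrightarrow> reach A q p"
  unfolding reach_def by (rule exI[of _ "[x]"]) auto

lemma card_reachable_states_le:
  "nfa_wf A \<Longrightarrow> card (reachable_states A q) \<le> card (states A)"
  unfolding nfa_wf_def reachable_states_def by (simp add: card_mono)

lemma card_reachable_states_pos:
  assumes "nfa_wf A" "q \<in> states A"
  shows "0 < card (reachable_states A q)"
proof -
  have "q \<in> reachable_states A q"
    using assms(2) reach_refl unfolding reachable_states_def by fast
  moreover have "finite (reachable_states A q)"
    using assms(1) unfolding nfa_wf_def reachable_states_def by simp
  ultimately show ?thesis
    by (simp add: card_gt_0_iff) blast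
qed

text \<open>Antisymmetry of reachability: leaving q along a non-loop transition loses q for good.\<close>

lemma poNFA_card_reachable_states_less:
  assumes po: "poNFA A" and q: "q \<in> states A"
    and p: "p \<in> trans A q x" and "p \<noteq> q"
  shows "card (reachable_states A p) < card (reachable_states A q)"
proof -
  have wf: "nfa_wf A"
    using po by (rule poNFA_nfa_wf)
  have pS: "p \<in> states A"
    using wf q p unfolding nfa_wf_def by blast
  have "reach A q p"
    using p by (rule reach_trans_step)
  then have "reachable_states A p \<subset> reachable_states A q"
    using po q pS \<open>p \<noteq> q\<close> reach_refl
    unfolding reachable_states_def poNFA_def by blast
  moreover have "finite (reachable_states A q)"
    using wf unfolding nfa_wf_def reachable_states_def by simp
  ultimately show ?thesis
    by (rule psubset_card_mono[rotated])
qed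

lemma delta_star_replicate_loop:
  assumes "q \<in> trans A q x" and "q' \<in> delta_star A q w"
  shows "q' \<in> delta_star A q (replicate t x @ w)"
  using assms by (induction t) auto

lemma poNFA_delta_star_replicate_stable:
  assumes po: "poNFA A" and q: "q \<in> states A"
    and run: "q' \<in> delta_star A q (replicate m x)"
    and m: "card (reachable_states A q) \<le> m" and n: "card (reachable_states A q) \<le> n"
  shows "q' \<in> delta_star A q (replicate n x)"
  using q run m n
proof (induction m arbitrary: q n)
  case 0
  then show ?case
    using card_reachable_states_pos[OF poNFA_nfa_wf[OF po]] by fastforce
next
  case (Suc m)
  obtain p where p: "p \<in> trans A q x" "q' \<in> delta_star A p (replicate m x)"
    using Suc.prems(2) by auto
  show ?case
  proof (cases "p = q")
    case True
    show ?thesis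
    proof (cases "card (reachable_states A q) \<le> m")
      case True
      with Suc.IH Suc.prems p \<open>p = q\<close> show ?thesis by blast
    next
      case False
      with Suc.prems(4) have "replicate n x = replicate (n - m) x @ replicate m x"
        by (simp flip: replicate_add)
      then show ?thesis
        using delta_star_replicate_loop p \<open>p = q\<close> by metis
    qed
  next
    case False
    have less: "card (reachable_states A p) < card (reachable_states A q)"
      using poNFA_card_reachable_states_less[OF po Suc.prems(1) p(1) False] .
    have "p \<in> states A"
      using poNFA_nfa_wf[OF po] Suc.prems(1) p(1) unfolding nfa_wf_def by blast
    then have "q' \<in> delta_star A p (replicate (n - 1) x)"
      using Suc.IH p(2) less Suc.prems(3,4) by simp
    then have "q' \<in> delta_star A q (replicate (Suc (n - 1)) x)"
      using p(1) by auto
    moreover have "Suc (n - 1) = n"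
      using less Suc.prems(4) by simp
    ultimately show ?thesis
      by simp
  qed
qed

lemma poNFA_replicate_lang_stable:
  assumes po: "poNFA A"
    and "card (states A) \<le> m" "card (states A) \<le> n"
    and "replicate m x \<in> lang A"
  shows "replicate n x \<in> lang A"
proof -
  obtain q q' where q: "q \<in> init A" "q' \<in> delta_star A q (replicate m x)" "q' \<in> final A"
    using assms(4) unfolding lang_def by blast
  have wf: "nfa_wf A"
    using po by (rule poNFA_nfa_wf)
  then have "q \<in> states A"
    using q(1) unfolding nfa_wf_def by blast
  moreover note card_reachable_states_le[OF wf, of q]
  ultimately have "q' \<in> delta_star A q (replicate n x)"
    using poNFA_delta_star_replicate_stable[OF po _ q(2)] assms(2,3) by simp
  then show ?thesis
    using q unfolding lang_def by blast
qed

definition chain_nfa :: "nat \<Rightarrow> nat set \<Rightarrow> (nat, 'a) nfa" where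
  "chain_nfa k F = \<lparr>states = {..k}, init = {0}, trans = (\<lambda>q _. {min (Suc q) k}), final = F\<rparr>"

lemma delta_star_chain_nfa:
  "q \<le> k \<Longrightarrow> delta_star (chain_nfa k F) q w = {min (q + length w) k}"
  by (induction w arbitrary: q) (auto simp: chain_nfa_def min_def)

lemma lang_chain_nfa: "lang (chain_nfa k F) = {w. min (length w) k \<in> F}"
  unfolding lang_def using delta_star_chain_nfa[of 0 k F]
  by (auto simp: chain_nfa_def)

lemma reach_chain_nfa_iff:
  assumes "p \<le> k" "q \<le> k"
  shows "reach (chain_nfa k F :: (nat, 'a) nfa) p q \<longleftrightarrow> p \<le> q"
proof
  assume "p \<le> q"
  then have "q \<in> delta_star (chain_nfa k F :: (nat, 'a) nfa) p (replicate (q - p) undefined)"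
    using assms by (simp add: delta_star_chain_nfa)
  then show "reach (chain_nfa k F :: (nat, 'a) nfa) p q"
    unfolding reach_def by blast
qed (use assms in \<open>auto simp: reach_def delta_star_chain_nfa\<close>)

lemma poNFA_chain_nfa:
  assumes "F \<subseteq> {..k}"
  shows "poNFA (chain_nfa k F :: (nat, 'a) nfa)"
proof -
  have "nfa_wf (chain_nfa k F :: (nat, 'a) nfa)"
    using assms unfolding nfa_wf_def chain_nfa_def by auto
  moreover have "states (chain_nfa k F :: (nat, 'a) nfa) = {..k}"
    by (simp add: chain_nfa_def)
  ultimately show ?thesis
    unfolding poNFA_def by (auto simp: reach_chain_nfa_iff)
qed

lemma unary_poNFA_lang_simR_k_invariant:
  assumes unary: "(UNIV :: 'a set) = {a}" and po: "poNFA A"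
    and sim: "simR_k (card (states A)) x (y :: 'a list)"
  shows "x \<in> lang A \<longleftrightarrow> y \<in> lang A"
proof (cases "length x = length y")
  case True
  then show ?thesis
    using unary_word_eqI[OF unary] by metis
next
  case False
  with sim have "card (states A) \<le> length x" "card (states A) \<le> length y"
    by (auto simp: unary_simR_k_iff[OF unary] min_def split: if_splits)
  then have "replicate (length x) a \<in> lang A \<longleftrightarrow> replicate (length y) a \<in> lang A"
    using poNFA_replicate_lang_stable[OF po] by blast
  then show ?thesis
    by (simp flip: unary_word[OF unary])
qed

lemma unary_lang_chain_nfa:
  assumes unary: "(UNIV :: 'a set) = {a}"
    and invariant: "\<And>x y. simR_k k x y \<Longrightarrow> x \<in> L \<longleftrightarrow> y \<in> L"
  shows "lang (chain_nfa k {i. i \<le> k \<and> replicate i a \<in> L}) = (L :: 'a list set)"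
proof -
  have "w \<in> L \<longleftrightarrow> replicate (min (length w) k) a \<in> L" for w
    by (rule invariant) (simp add: unary_simR_k_iff[OF unary])
  moreover have "min (length w) k \<le> k" for w :: "'a list"
    by simp
  ultimately show ?thesis
    unfolding lang_chain_nfa by blast
qed

theorem mainTheorem10:
  fixes a :: 'a and L :: "'a list set"
  assumes "(UNIV :: 'a set) = {a}"
  shows "(\<exists>A :: (nat, 'a) nfa. poNFA A \<and> lang A = L) \<longleftrightarrow> R_trivial L"
proof
  assume "\<exists>A :: (nat, 'a) nfa. poNFA A \<and> lang A = L"
  then obtain A :: "(nat, 'a) nfa" where A: "poNFA A" "lang A = L"
    by blast
  then have "regular L"
    unfolding regular_def by (auto dest: poNFA_nfa_wf)
  with A show "R_trivial L"
    unfolding R_trivial_def using unary_poNFA_lang_simR_k_invariant[OF assms] by blast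
next
  assume "R_trivial L"
  then obtain k where "\<And>x y. simR_k k x y \<Longrightarrow> x \<in> L \<longleftrightarrow> y \<in> L"
    unfolding R_trivial_def by blast
  then have "lang (chain_nfa k {i. i \<le> k \<and> replicate i a \<in> L}) = L"
    by (rule unary_lang_chain_nfa[OF assms])
  moreover have "poNFA (chain_nfa k {i. i \<le> k \<and> replicate i a \<in> L} :: (nat, 'a) nfa)"
    by (rule poNFA_chain_nfa) auto
  ultimately show "\<exists>A :: (nat, 'a) nfa. poNFA A \<and> lang A = L"
    by blast
qed

end
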